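(* Let $H=\sum_{\mathbf{j}\in V}h_{\mathbf{j}}$ be a Hamiltonian with frustration graph $G$, let $K_s$ be a simplicial clique in $G$, and for $\mathbf{j}\in K_s$ let $K_{\mathbf{j}}=\Gamma[\mathbf{j}]\setminus(K_s\setminus\{\mathbf{j}\})$, so that $\Gamma[\mathbf{j}]=K_s\cup K_{\mathbf{j}}$. Then for every integer $k\ge1$, \[ Q^{(k)}_G=Q^{(k)}_{G\setminus K_s}+\sum_{\mathbf{j}\in K_s}Q^{(k-1)}_{G\setminus K_{\mathbf{j}}}\,h_{\mathbf{j}} . \]
   Context: Setting: $V$ a finite set of distinct $n$-qubit Pauli strings, $H=\sum_{\mathbf{j}\in V}h_{\mathbf{j}}$ with $h_{\mathbf{j}}=b_{\mathbf{j}}\sigma^{\mathbf{j}}$, $b_{\mathbf{j}}\in\mathbb{R}\setminus\{0\}$; frustration graph $G$: edge iff terms anticommute. $\Gamma[\mathbf{j}]$ is the closed neighbourhood of $\mathbf{j}$. Simplicial clique: clique $K_s$ with $\Gamma(\mathbf{j})\setminus K_s$ a clique for every $\mathbf{j}\in K_s$. For an induced subgraph $G'$ of $G$ and $k\ge0$, the independent set charge is $Q^{(k)}_{G'}=\sum_{S}h_S$, summed over independent sets $S$ of $G'$ of size $k$, where $h_S=\prod_{\mathbf{j}\in S}h_{\mathbf{j}}$ (so $Q^{(0)}_{G'}=I$, and $Q^{(k)}_{G'}=0$ if $G'$ has no independent set of size $k$). $G\setminus U$ denotes the subgraph induced by $V\setminus U$. *)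

theory Defs
  imports Complex_Main "HOL-Library.Function_Algebras"
begin

text \<open>Matrices of size 2^n x 2^n over the complex numbers are represented as
functions nat => nat => complex (entries outside the range are 0).
Qubit t of a basis index i is the bit (i div 2^t) mod 2.\<close>

type_synonym cmat = "nat \<Rightarrow> nat \<Rightarrow> complex"

datatype pauli = PI | PX | PY | PZ

fun pmat :: "pauli \<Rightarrow> nat \<Rightarrow> nat \<Rightarrow> complex" where
  "pmat PI a c = (if a = c then 1 else 0)"
| "pmat PX a c = (if a \<noteq> c then 1 else 0)"
| "pmat PY a c = (if a = 0 \<and> c = 1 then - \<i> else if a = 1 \<and> c = 0 then \<i> else 0)"
| "pmat PZ a c = (if a = c then (if a = 0 then 1 else -1) else 0)"

definition mmul :: "nat \<Rightarrow> cmat \<Rightarrow> cmat \<Rightarrow> cmat" where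
  "mmul n A B = (\<lambda>i j. \<Sum>l<2^n. A i l * B l j)"

definition ident :: "nat \<Rightarrow> cmat" where
  "ident n = (\<lambda>i j. if i = j \<and> i < 2^n then 1 else 0)"

text \<open>The Pauli string sigma^p = tensor product of the single-qubit Paulis p!0,...,p!(n-1).\<close>
definition sigma :: "nat \<Rightarrow> pauli list \<Rightarrow> cmat" where
  "sigma n p = (\<lambda>i j. if i < 2^n \<and> j < 2^n
      then \<Prod>t<n. pmat (p ! t) (i div 2^t mod 2) (j div 2^t mod 2) else 0)"

definition hterm :: "nat \<Rightarrow> (pauli list \<Rightarrow> real) \<Rightarrow> pauli list \<Rightarrow> cmat" where
  "hterm n b p = (\<lambda>i j. complex_of_real (b p) * sigma n p i j)"

definition anticommute :: "nat \<Rightarrow> pauli list \<Rightarrow> pauli list \<Rightarrow> bool" where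
  "anticommute n p q \<longleftrightarrow> mmul n (sigma n p) (sigma n q) = - mmul n (sigma n q) (sigma n p)"

text \<open>Product h_S of the terms in S (in some enumeration order; for independent sets
the factors commute, so the order is irrelevant).\<close>
definition hprod :: "nat \<Rightarrow> (pauli list \<Rightarrow> real) \<Rightarrow> pauli list set \<Rightarrow> cmat" where
  "hprod n b S = foldr (mmul n) (map (hterm n b) (SOME xs. set xs = S \<and> distinct xs)) (ident n)"

definition indep_set :: "nat \<Rightarrow> pauli list set \<Rightarrow> pauli list set \<Rightarrow> bool" where
  "indep_set n U S \<longleftrightarrow> S \<subseteq> U \<and> (\<forall>p\<in>S. \<forall>q\<in>S. \<not> anticommute n p q)"

definition Qcharge :: "nat \<Rightarrow> (pauli list \<Rightarrow> real) \<Rightarrow> pauli list set \<Rightarrow> nat \<Rightarrow> cmat" where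
  "Qcharge n b U k = (\<Sum>S\<in>{S. indep_set n U S \<and> card S = k}. hprod n b S)"

definition is_clique :: "nat \<Rightarrow> pauli list set \<Rightarrow> pauli list set \<Rightarrow> bool" where
  "is_clique n V K \<longleftrightarrow> K \<subseteq> V \<and> (\<forall>p\<in>K. \<forall>q\<in>K. p \<noteq> q \<longrightarrow> anticommute n p q)"

definition open_nbhd :: "nat \<Rightarrow> pauli list set \<Rightarrow> pauli list \<Rightarrow> pauli list set" where
  "open_nbhd n V j = {q\<in>V. q \<noteq> j \<and> anticommute n j q}"

definition closed_nbhd :: "nat \<Rightarrow> pauli list set \<Rightarrow> pauli list \<Rightarrow> pauli list set" where
  "closed_nbhd n V j = insert j (open_nbhd n V j)"

definition simplicial_clique :: "nat \<Rightarrow> pauli list set \<Rightarrow> pauli list set \<Rightarrow> bool" where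
  "simplicial_clique n V K \<longleftrightarrow> is_clique n V K \<and>
     (\<forall>j\<in>K. is_clique n V (open_nbhd n V j - K))"

end

theory Submission
  imports Defs
begin

(* An independent set meets a clique K in at most one vertex, and the independent sets containing j
   are the sets {j} \<union> S with S independent in G \ \<Gamma>[j].  Hence, for every clique K,
     Q^(k)_G = Q^(k)_(G \ K) + (\<Sum>j\<in>K. Q^(k-1)_(G \ \<Gamma>[j]) h_j).
   The vertices of G \ K_j are those of G \ \<Gamma>[j] together with the clique K - {j}, so splitting
   Q^(k-1)_(G \ K_j) along K - {j} gives Q^(k-1)_(G \ \<Gamma>[j]) plus terms which, multiplied by h_j,
   become Q^(k-2)_(G \ \<Gamma>[j] \ \<Gamma>[j']) h_j' h_j with j' \<noteq> j in K.  Summed over j these cancel in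
   pairs, because the vertex set is symmetric in j, j' while h_j' h_j = - h_j h_j'. *)

lemma sum_fun_apply: "(\<Sum>a\<in>A. f a) x = (\<Sum>a\<in>A. f a x)"
  by (induction A rule: infinite_finite_induct) auto

(* ident n is a unit only for matrices vanishing outside the 2^n x 2^n block. *)
definition mat_supported :: "nat \<Rightarrow> cmat \<Rightarrow> bool" where
  "mat_supported n A \<longleftrightarrow> (\<forall>i j. 2^n \<le> i \<or> 2^n \<le> j \<longrightarrow> A i j = 0)"

lemma mat_supported_mmul: "mat_supported n A \<Longrightarrow> mat_supported n B \<Longrightarrow> mat_supported n (mmul n A B)"
  unfolding mat_supported_def mmul_def by auto

lemma mat_supported_hterm: "mat_supported n (hterm n b p)"
  unfolding mat_supported_def hterm_def sigma_def by auto

lemma mat_supported_ident: "mat_supported n (ident n)"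
  unfolding mat_supported_def ident_def by auto

lemma mmul_assoc: "mmul n (mmul n A B) C = mmul n A (mmul n B C)"
  unfolding mmul_def
  by (intro ext) (auto simp: sum_distrib_left sum_distrib_right mult.assoc intro: sum.swap)

lemma mmul_ident_left: "mat_supported n A \<Longrightarrow> mmul n (ident n) A = A"
  unfolding mmul_def ident_def mat_supported_def
  by (intro ext) (auto simp: if_distrib[of "\<lambda>x. x * _"] not_le cong: conj_cong if_cong)

lemma mmul_ident_right: "mat_supported n A \<Longrightarrow> mmul n A (ident n) = A"
  unfolding mmul_def ident_def mat_supported_def
  by (intro ext) (auto simp: if_distrib[of "\<lambda>x. _ * x"] not_le cong: if_cong)

lemma mmul_zero_left: "mmul n 0 B = 0"
  unfolding mmul_def by (intro ext) simp

lemma mmul_add_left: "mmul n (A + B) C = mmul n A C + mmul n B C"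
  unfolding mmul_def by (intro ext) (simp add: distrib_right sum.distrib)

lemma mmul_sum_left: "mmul n (\<Sum>s\<in>S. A s) B = (\<Sum>s\<in>S. mmul n (A s) B)"
  unfolding mmul_def by (intro ext) (auto simp: sum_fun_apply sum_distrib_right intro: sum.swap)

lemma mmul_uminus_right: "mmul n A (- B) = - mmul n A B"
  unfolding mmul_def by (intro ext) (simp add: sum_negf)

lemma sum_lessThan_double:
  fixes g :: "nat \<Rightarrow> 'a::comm_monoid_add"
  shows "(\<Sum>l<2*m. g l) = (\<Sum>l<m. g (2*l) + g (2*l+1))"
  by (induction m) (auto simp: sum.distrib add_ac)

lemma sum_prod_bits:
  fixes f :: "nat \<Rightarrow> nat \<Rightarrow> 'a::comm_semiring_1"
  shows "(\<Sum>l<2^n. \<Prod>t<n. f t (l div 2^t mod 2)) = (\<Prod>t<n. f t 0 + f t 1)"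
proof (induction n arbitrary: f)
  case (Suc n)
  have bit_Suc: "l div 2^Suc t mod 2 = l div 2 div 2^t mod 2" for l t :: nat
    by (simp add: div_mult2_eq)
  have "(\<Sum>l<2^Suc n. \<Prod>t<Suc n. f t (l div 2^t mod 2))
      = (\<Sum>l<2^Suc n. f 0 (l mod 2) * (\<Prod>t<n. f (Suc t) (l div 2 div 2^t mod 2)))"
    unfolding prod.lessThan_Suc_shift bit_Suc by simp
  also have "\<dots> = (\<Sum>l<2^n. (f 0 0 + f 0 1) * (\<Prod>t<n. f (Suc t) (l div 2^t mod 2)))"
    by (simp add: sum_lessThan_double distrib_right)
  also have "\<dots> = (\<Prod>t<Suc n. f t 0 + f t 1)"
    unfolding sum_distrib_left[symmetric] Suc.IH[of "\<lambda>t. f (Suc t)"] prod.lessThan_Suc_shift by simp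
  finally show ?case .
qed simp

definition pmat_mul :: "pauli \<Rightarrow> pauli \<Rightarrow> nat \<Rightarrow> nat \<Rightarrow> complex" where
  "pmat_mul a c i j = pmat a i 0 * pmat c 0 j + pmat a i 1 * pmat c 1 j"

definition pauli_sign :: "pauli \<Rightarrow> pauli \<Rightarrow> complex" where
  "pauli_sign a c = (if a = PI \<or> c = PI \<or> a = c then 1 else -1)"

lemma pmat_mul_swap: "i < 2 \<Longrightarrow> j < 2 \<Longrightarrow> pmat_mul a c i j = pauli_sign a c * pmat_mul c a i j"
  by (cases a; cases c) (auto simp: pmat_mul_def pauli_sign_def less_2_cases_iff)

lemma mmul_sigma:
  "mmul n (sigma n p) (sigma n q) i j =
    (if i < 2^n \<and> j < 2^n
     then \<Prod>t<n. pmat_mul (p!t) (q!t) (i div 2^t mod 2) (j div 2^t mod 2) else 0)"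
proof (cases "i < 2^n \<and> j < 2^n")
  case True
  then have "mmul n (sigma n p) (sigma n q) i j = (\<Sum>l<2^n. \<Prod>t<n.
      pmat (p!t) (i div 2^t mod 2) (l div 2^t mod 2) * pmat (q!t) (l div 2^t mod 2) (j div 2^t mod 2))"
    by (simp add: mmul_def sigma_def prod.distrib)
  with True show ?thesis
    by (simp add: sum_prod_bits[of "\<lambda>t c. pmat (p!t) (i div 2^t mod 2) c * pmat (q!t) c (j div 2^t mod 2)"]
        pmat_mul_def)
qed (auto simp: mmul_def sigma_def)

lemma prod_pauli_sign_cases:
  "(\<Prod>t<(n::nat). pauli_sign (f t) (g t)) = 1 \<or> (\<Prod>t<n. pauli_sign (f t) (g t)) = -1"
  by (induction n) (auto simp: pauli_sign_def)

lemma mmul_sigma_swap: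
  "mmul n (sigma n p) (sigma n q) i j = (\<Prod>t<n. pauli_sign (p!t) (q!t)) * mmul n (sigma n q) (sigma n p) i j"
  unfolding mmul_sigma by (auto simp: prod.distrib[symmetric] intro!: prod.cong pmat_mul_swap)

lemma sigma_commute:
  assumes "\<not> anticommute n p q"
  shows "mmul n (sigma n p) (sigma n q) = mmul n (sigma n q) (sigma n p)"
proof -
  let ?s = "\<Prod>t<n. pauli_sign (p!t) (q!t)"
  have "?s \<noteq> -1"
  proof
    assume "?s = -1"
    then have "anticommute n p q"
      unfolding anticommute_def by (intro ext) (simp add: mmul_sigma_swap[of n p q])
    with assms show False ..
  qed
  then have "?s = 1" using prod_pauli_sign_cases by blast
  then show ?thesis by (intro ext) (simp add: mmul_sigma_swap[of n p q])
qed

lemma not_anticommute_self: "\<not> anticommute n p p"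
proof
  assume anti: "anticommute n p p"
  have "pmat_mul a a 0 0 = 1" for a by (cases a) (simp_all add: pmat_mul_def)
  then have "mmul n (sigma n p) (sigma n p) 0 0 = 1" by (simp add: mmul_sigma)
  moreover have "mmul n (sigma n p) (sigma n p) 0 0 = - mmul n (sigma n p) (sigma n p) 0 0"
    using anti unfolding anticommute_def by (metis uminus_apply)
  ultimately show False by simp
qed

lemma anticommute_sym: "anticommute n p q \<Longrightarrow> anticommute n q p"
  unfolding anticommute_def by (metis minus_minus)

lemma mmul_hterm:
  "mmul n (hterm n b p) (hterm n b q) i j = complex_of_real (b p * b q) * mmul n (sigma n p) (sigma n q) i j"
  unfolding mmul_def hterm_def by (auto simp: sum_distrib_left mult_ac)

lemma hterm_commute:
  assumes "\<not> anticommute n p q"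
  shows "mmul n (hterm n b p) (hterm n b q) = mmul n (hterm n b q) (hterm n b p)"
  by (intro ext) (simp add: mmul_hterm sigma_commute[OF assms] mult.commute)

lemma hterm_anticommute:
  "anticommute n p q \<Longrightarrow> mmul n (hterm n b p) (hterm n b q) = - mmul n (hterm n b q) (hterm n b p)"
  unfolding anticommute_def by (intro ext) (simp add: mmul_hterm mult.commute)

definition hlist_prod :: "nat \<Rightarrow> (pauli list \<Rightarrow> real) \<Rightarrow> pauli list list \<Rightarrow> cmat" where
  "hlist_prod n b xs = foldr (mmul n) (map (hterm n b) xs) (ident n)"

lemma hlist_prod_Nil [simp]: "hlist_prod n b [] = ident n"
  by (simp add: hlist_prod_def)

lemma hlist_prod_Cons [simp]: "hlist_prod n b (x # xs) = mmul n (hterm n b x) (hlist_prod n b xs)"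
  by (simp add: hlist_prod_def)

lemma mat_supported_hlist_prod: "mat_supported n (hlist_prod n b xs)"
  by (induction xs) (simp_all add: mat_supported_ident mat_supported_mmul mat_supported_hterm)

lemma hlist_prod_append: "hlist_prod n b (xs @ ys) = mmul n (hlist_prod n b xs) (hlist_prod n b ys)"
  by (induction xs) (simp_all add: mmul_ident_left mat_supported_hlist_prod mmul_assoc)

lemma hterm_hlist_prod_commute:
  assumes "\<forall>y\<in>set ys. \<not> anticommute n x y"
  shows "mmul n (hterm n b x) (hlist_prod n b ys) = mmul n (hlist_prod n b ys) (hterm n b x)"
  using assms
proof (induction ys)
  case Nil
  then show ?case by (simp add: mmul_ident_left mmul_ident_right mat_supported_hterm)
next
  case (Cons y ys)
  have "mmul n (hterm n b x) (hlist_prod n b (y # ys))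
      = mmul n (mmul n (hterm n b x) (hterm n b y)) (hlist_prod n b ys)"
    by (simp add: mmul_assoc)
  also have "\<dots> = mmul n (hterm n b y) (mmul n (hterm n b x) (hlist_prod n b ys))"
    using Cons.prems hterm_commute[of n x y b] by (simp add: mmul_assoc)
  also have "\<dots> = mmul n (hlist_prod n b (y # ys)) (hterm n b x)"
    using Cons by (simp add: mmul_assoc)
  finally show ?case .
qed

lemma hlist_prod_perm:
  assumes "distinct xs" "distinct ys" "set xs = set ys"
    and "\<forall>p\<in>set xs. \<forall>q\<in>set xs. \<not> anticommute n p q"
  shows "hlist_prod n b xs = hlist_prod n b ys"
  using assms
proof (induction xs arbitrary: ys)
  case (Cons x xs)
  then obtain ys1 ys2 where ys: "ys = ys1 @ x # ys2"
    by (metis list.set_intros(1) split_list)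
  have set_xs: "set xs = set (ys1 @ ys2)"
    using Cons.prems unfolding ys by auto
  have "mmul n (hterm n b x) (hlist_prod n b ys1) = mmul n (hlist_prod n b ys1) (hterm n b x)"
    using Cons.prems unfolding ys by (intro hterm_hlist_prod_commute) auto
  then have "hlist_prod n b ys = mmul n (hterm n b x) (hlist_prod n b (ys1 @ ys2))"
    unfolding ys hlist_prod_append hlist_prod_Cons by (metis mmul_assoc)
  also have "hlist_prod n b (ys1 @ ys2) = hlist_prod n b xs"
    using Cons.prems set_xs unfolding ys by (intro Cons.IH[symmetric]) auto
  finally show ?case by simp
qed simp

lemma hprod_eq_hlist_prod:
  assumes "distinct xs" "set xs = S" "\<forall>p\<in>S. \<forall>q\<in>S. \<not> anticommute n p q"
  shows "hprod n b S = hlist_prod n b xs"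
proof -
  let ?ys = "SOME xs. set xs = S \<and> distinct xs"
  have "set ?ys = S \<and> distinct ?ys"
    by (rule someI_ex) (use assms in blast)
  then show ?thesis
    unfolding hprod_def hlist_prod_def[symmetric] using assms by (intro hlist_prod_perm) auto
qed

lemma hprod_insert:
  assumes "finite S" "j \<notin> S" "\<forall>p\<in>insert j S. \<forall>q\<in>insert j S. \<not> anticommute n p q"
  shows "hprod n b (insert j S) = mmul n (hprod n b S) (hterm n b j)"
proof -
  obtain xs where xs: "set xs = S" "distinct xs"
    using finite_distinct_list[OF assms(1)] by blast
  have "hprod n b S = hlist_prod n b xs"
    using assms xs by (intro hprod_eq_hlist_prod) auto
  moreover have "hprod n b (insert j S) = hlist_prod n b (xs @ [j])"
    using assms xs by (intro hprod_eq_hlist_prod) auto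
  ultimately show ?thesis
    by (simp add: hlist_prod_append mmul_ident_right mat_supported_hterm)
qed

definition indep_sets :: "nat \<Rightarrow> pauli list set \<Rightarrow> nat \<Rightarrow> pauli list set set" where
  "indep_sets n U k = {S. indep_set n U S \<and> card S = k}"

definition Qcharge_through ::
    "nat \<Rightarrow> (pauli list \<Rightarrow> real) \<Rightarrow> pauli list set \<Rightarrow> pauli list \<Rightarrow> nat \<Rightarrow> cmat" where
  "Qcharge_through n b U c k = (\<Sum>S\<in>{S\<in>indep_sets n U k. c \<in> S}. hprod n b S)"

lemma Qcharge_eq_sum_indep_sets: "Qcharge n b U k = (\<Sum>S\<in>indep_sets n U k. hprod n b S)"
  by (simp add: Qcharge_def indep_sets_def)

lemma finite_indep_sets: "finite U \<Longrightarrow> finite (indep_sets n U k)"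
  by (rule finite_subset[of _ "Pow U"]) (auto simp: indep_sets_def indep_set_def)

lemma Qcharge_split_clique:
  assumes "finite U" "is_clique n U C"
  shows "Qcharge n b U k = Qcharge n b (U - C) k + (\<Sum>c\<in>C. Qcharge_through n b U c k)"
proof -
  have C: "C \<subseteq> U" and anti: "\<And>c c'. c \<in> C \<Longrightarrow> c' \<in> C \<Longrightarrow> c \<noteq> c' \<Longrightarrow> anticommute n c c'"
    using assms(2) by (auto simp: is_clique_def)
  let ?through = "\<lambda>c. {S\<in>indep_sets n U k. c \<in> S}"
  have partition: "indep_sets n U k = indep_sets n (U - C) k \<union> (\<Union>c\<in>C. ?through c)"
    using C by (auto simp: indep_sets_def indep_set_def)
  have disjoint: "?through c \<inter> ?through c' = {}" if "c \<in> C" "c' \<in> C" "c \<noteq> c'" for c c'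
    using anti[OF that] by (auto simp: indep_sets_def indep_set_def)
  have "indep_sets n (U - C) k \<inter> (\<Union>c\<in>C. ?through c) = {}"
    by (auto simp: indep_sets_def indep_set_def)
  moreover have fin: "finite C" "finite (indep_sets n U k)" "finite (indep_sets n (U - C) k)"
    using assms(1) C finite_subset finite_indep_sets by blast+
  ultimately have "Qcharge n b U k = Qcharge n b (U - C) k + (\<Sum>S\<in>(\<Union>c\<in>C. ?through c). hprod n b S)"
    unfolding Qcharge_eq_sum_indep_sets by (subst partition) (simp add: sum.union_disjoint)
  also have "(\<Sum>S\<in>(\<Union>c\<in>C. ?through c). hprod n b S) = (\<Sum>c\<in>C. Qcharge_through n b U c k)"
    unfolding Qcharge_through_def using fin disjoint by (subst sum.UNION_disjoint) auto
  finally show ?thesis .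
qed

lemma indep_set_insert:
  assumes "c \<notin> T"
  shows "indep_set n U (insert c T) \<longleftrightarrow> c \<in> U \<and> indep_set n (U - closed_nbhd n U c) T"
  using assms not_anticommute_self[of n c]
  by (auto simp: indep_set_def closed_nbhd_def open_nbhd_def dest: anticommute_sym)

lemma indep_sets_through_Suc:
  assumes "finite U" "c \<in> U"
  shows "{S\<in>indep_sets n U (Suc m). c \<in> S} = insert c ` indep_sets n (U - closed_nbhd n U c) m"
proof (intro equalityI subsetI)
  fix S assume S: "S \<in> {S\<in>indep_sets n U (Suc m). c \<in> S}"
  then have "finite S"
    using assms(1) finite_subset by (auto simp: indep_sets_def indep_set_def)
  with S have "S - {c} \<in> indep_sets n (U - closed_nbhd n U c) m"
    using indep_set_insert[of c "S - {c}" n U] by (auto simp: indep_sets_def insert_absorb)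
  with S show "S \<in> insert c ` indep_sets n (U - closed_nbhd n U c) m"
    by (auto intro: rev_image_eqI)
next
  fix S assume "S \<in> insert c ` indep_sets n (U - closed_nbhd n U c) m"
  then obtain T where T: "T \<in> indep_sets n (U - closed_nbhd n U c) m" "S = insert c T"
    by blast
  then have "c \<notin> T" "finite T"
    using assms(1) finite_subset by (auto simp: indep_sets_def indep_set_def closed_nbhd_def)
  with T assms(2) show "S \<in> {S\<in>indep_sets n U (Suc m). c \<in> S}"
    using indep_set_insert[of c T n U] by (auto simp: indep_sets_def)
qed

lemma Qcharge_through_Suc:
  assumes "finite U" "c \<in> U"
  shows "Qcharge_through n b U c (Suc m) = mmul n (Qcharge n b (U - closed_nbhd n U c) m) (hterm n b c)"
proof -
  let ?U' = "U - closed_nbhd n U c"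
  have c_notin: "c \<notin> T" and finite_T: "finite T" if "T \<in> indep_sets n ?U' m" for T
    using that assms(1) finite_subset by (auto simp: indep_sets_def indep_set_def closed_nbhd_def)
  have "inj_on (insert c) (indep_sets n ?U' m)"
    using c_notin by (intro inj_onI) (metis Diff_insert_absorb)
  then have "Qcharge_through n b U c (Suc m) = (\<Sum>T\<in>indep_sets n ?U' m. hprod n b (insert c T))"
    unfolding Qcharge_through_def indep_sets_through_Suc[OF assms] by (simp add: sum.reindex)
  also have "\<dots> = (\<Sum>T\<in>indep_sets n ?U' m. mmul n (hprod n b T) (hterm n b c))"
  proof (rule sum.cong[OF refl])
    fix T assume T: "T \<in> indep_sets n ?U' m"
    then have "indep_set n U (insert c T)"
      using indep_set_insert[OF c_notin[OF T]] assms(2) by (simp add: indep_sets_def)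
    with T show "hprod n b (insert c T) = mmul n (hprod n b T) (hterm n b c)"
      using c_notin finite_T by (intro hprod_insert) (auto simp: indep_set_def)
  qed
  also have "\<dots> = mmul n (Qcharge n b ?U' m) (hterm n b c)"
    by (simp add: Qcharge_eq_sum_indep_sets mmul_sum_left)
  finally show ?thesis .
qed

lemma Qcharge_through_0:
  assumes "finite U"
  shows "Qcharge_through n b U c 0 = 0"
proof -
  have "{S\<in>indep_sets n U 0. c \<in> S} = {}"
    using finite_subset[OF _ assms] by (auto simp: indep_sets_def indep_set_def)
  then show ?thesis unfolding Qcharge_through_def by (metis sum.empty)
qed

lemma sum_offdiag_antisym_eq_0:
  fixes f :: "'a \<Rightarrow> 'a \<Rightarrow> cmat"
  assumes "finite K" and antisym: "\<And>j j'. j \<in> K \<Longrightarrow> j' \<in> K \<Longrightarrow> j \<noteq> j' \<Longrightarrow> f j' j = - f j j'"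
  shows "(\<Sum>j\<in>K. \<Sum>j'\<in>K - {j}. f j j') = 0"
proof -
  let ?S = "\<Sum>j\<in>K. \<Sum>j'\<in>K - {j}. f j j'"
  have "?S = (\<Sum>j\<in>K. \<Sum>j'\<in>{j'\<in>K. j \<noteq> j'}. f j j')"
    by (intro sum.cong) auto
  also have "\<dots> = (\<Sum>j'\<in>K. \<Sum>j\<in>{j\<in>K. j \<noteq> j'}. f j j')"
    by (rule sum.swap_restrict[OF assms(1) assms(1)])
  also have "\<dots> = (\<Sum>j'\<in>K. \<Sum>j\<in>K - {j'}. - f j' j)"
    using antisym by (intro sum.cong) auto
  also have "\<dots> = - ?S"
    by (simp only: sum_negf)
  finally have S_eq: "?S = - ?S" .
  show ?thesis
  proof (intro ext)
    fix i j
    have "?S i j = - ?S i j"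
      using fun_cong[OF fun_cong[OF S_eq, of i], of j] unfolding uminus_apply .
    then show "?S i j = 0 i j"
      by simp
  qed
qed

lemma Qcharge_clique_expansion:
  assumes "finite V" "is_clique n V K"
  shows "Qcharge n b V (Suc m) =
           Qcharge n b (V - K) (Suc m) + (\<Sum>j\<in>K. mmul n (Qcharge n b (V - closed_nbhd n V j) m) (hterm n b j))"
proof -
  have "j \<in> V" if "j \<in> K" for j
    using assms(2) that by (auto simp: is_clique_def)
  then show ?thesis
    by (simp add: Qcharge_split_clique[OF assms] Qcharge_through_Suc[OF assms(1)])
qed

lemma Qcharge_punctured_nbhd:
  assumes "finite V" "is_clique n V K" "j \<in> K"
  shows "Qcharge n b (V - (closed_nbhd n V j - (K - {j}))) m =
           Qcharge n b (V - closed_nbhd n V j) m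
           + (\<Sum>j'\<in>K - {j}. Qcharge_through n b (V - (closed_nbhd n V j - (K - {j}))) j' m)"
proof -
  let ?U = "V - (closed_nbhd n V j - (K - {j}))"
  have "is_clique n ?U (K - {j})"
    using assms(2) by (auto simp: is_clique_def)
  moreover have "?U - (K - {j}) = V - closed_nbhd n V j"
    using assms(2,3) by (auto simp: is_clique_def closed_nbhd_def open_nbhd_def)
  ultimately show ?thesis
    using Qcharge_split_clique[of ?U n "K - {j}" b m] assms(1) by simp
qed

lemma clique_crossterms_cancel:
  assumes "finite V" "is_clique n V K"
  shows "(\<Sum>j\<in>K. \<Sum>j'\<in>K - {j}.
            mmul n (Qcharge_through n b (V - (closed_nbhd n V j - (K - {j}))) j' m) (hterm n b j)) = 0"
proof (cases m)
  case 0
  then show ?thesis using assms(1) by (simp add: Qcharge_through_0 mmul_zero_left)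
next
  case (Suc m')
  let ?W = "\<lambda>j j'. V - closed_nbhd n V j - closed_nbhd n V j'"
  have through: "Qcharge_through n b (V - (closed_nbhd n V j - (K - {j}))) j' m
      = mmul n (Qcharge n b (?W j j') m') (hterm n b j')" if "j \<in> K" "j' \<in> K - {j}" for j j'
  proof -
    have "V - (closed_nbhd n V j - (K - {j})) - closed_nbhd n (V - (closed_nbhd n V j - (K - {j}))) j'
        = ?W j j'"
      using assms(2) that by (auto simp: is_clique_def closed_nbhd_def open_nbhd_def)
    then show ?thesis
      using Qcharge_through_Suc[of "V - (closed_nbhd n V j - (K - {j}))" j' n b m'] assms that
      by (simp add: Suc is_clique_def subset_iff)
  qed
  have "finite K"
    using assms finite_subset by (auto simp: is_clique_def)
  have "(\<Sum>j\<in>K. \<Sum>j'\<in>K - {j}.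
            mmul n (Qcharge_through n b (V - (closed_nbhd n V j - (K - {j}))) j' m) (hterm n b j))
      = (\<Sum>j\<in>K. \<Sum>j'\<in>K - {j}. mmul n (mmul n (Qcharge n b (?W j j') m') (hterm n b j')) (hterm n b j))"
    by (intro sum.cong refl) (simp add: through)
  also have "\<dots> = 0"
    using \<open>finite K\<close>
  proof (rule sum_offdiag_antisym_eq_0)
    fix j j' assume "j \<in> K" "j' \<in> K" "j \<noteq> j'"
    then have "anticommute n j j'"
      using assms(2) by (auto simp: is_clique_def)
    moreover have "?W j' j = ?W j j'" by blast
    ultimately show "mmul n (mmul n (Qcharge n b (?W j' j) m') (hterm n b j)) (hterm n b j')
        = - mmul n (mmul n (Qcharge n b (?W j j') m') (hterm n b j')) (hterm n b j)"
      by (simp add: mmul_assoc hterm_anticommute mmul_uminus_right)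
  qed
  finally show ?thesis .
qed

theorem lemma18:
  fixes n :: nat and V K :: "pauli list set" and b :: "pauli list \<Rightarrow> real" and k :: nat
  assumes "finite V"
    and "\<forall>p\<in>V. length p = n"
    and "\<forall>p\<in>V. b p \<noteq> 0"
    and "simplicial_clique n V K"
    and "k \<ge> 1"
  shows "Qcharge n b V k =
           Qcharge n b (V - K) k
           + (\<Sum>j\<in>K. mmul n (Qcharge n b (V - (closed_nbhd n V j - (K - {j}))) (k - 1)) (hterm n b j))"
proof -
  obtain m where k: "k = Suc m"
    using assms(5) by (cases k) auto
  have clique: "is_clique n V K"
    using assms(4) by (simp add: simplicial_clique_def)
  have "(\<Sum>j\<in>K. mmul n (Qcharge n b (V - (closed_nbhd n V j - (K - {j}))) m) (hterm n b j))
      = (\<Sum>j\<in>K. mmul n (Qcharge n b (V - closed_nbhd n V j) m) (hterm n b j))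
        + (\<Sum>j\<in>K. \<Sum>j'\<in>K - {j}.
            mmul n (Qcharge_through n b (V - (closed_nbhd n V j - (K - {j}))) j' m) (hterm n b j))"
    by (simp add: Qcharge_punctured_nbhd[OF assms(1) clique] mmul_add_left mmul_sum_left sum.distrib
        cong: sum.cong)
  also have "\<dots> = (\<Sum>j\<in>K. mmul n (Qcharge n b (V - closed_nbhd n V j) m) (hterm n b j))"
    by (simp add: clique_crossterms_cancel[OF assms(1) clique])
  finally show ?thesis
    by (simp add: k Qcharge_clique_expansion[OF assms(1) clique])
qed

end
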